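(* Let $M$ be a $\lambda$-term. (1) (CbN) If $M\to_\beta M'$ then $M^n\to_v M'^n$ (hence $M^n\to_b M'^n$). Conversely, if $M^n\to_b S$ then $M^n\to_v S$, and there is a $\lambda$-term $M'$ with $S=M'^n$ and $M\to_\beta M'$. (2) (Ground CbN) If $M\to_{w\beta} M'$ then $M^n\to_{wv} M'^n$ (hence $M^n\to_{wb} M'^n$). Conversely, if $M^n\to_{wb} S$ then $M^n\to_{wv} S$, and there is a $\lambda$-term $M'$ with $S=M'^n$ and $M\to_{w\beta} M'$. (3) (CbV) If $M\to_{\beta_v} M'$ then there is $S_0$ with $M^v\to_d S_0\to_v M'^v$ (hence $M^v\to_b\to_b M'^v$). Conversely, if $M^v\to_d S_0\to_v S$ for some $S_0,S$, then there is a $\lambda$-term $M'$ with $S=M'^v$ and $M\to_{\beta_v}M'$. (4) (Ground CbV) If $M\to_{w\beta_v} M'$ then there is $S_0$ with $M^v\to_{wd} S_0\to_{wv} M'^v$ (hence $M^v\to_{wb}\to_{wb} M'^v$). Conversely, if $M^v\to_{wd} S_0\to_{wv} S$ for some $S_0,S$, then there is a $\lambda$-term $M'$ with $S=M'^v$ and $M\to_{w\beta_v}M'$.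
   Context: Bang calculus. Fix a countably infinite set of variables. The set $!\Lambda$ of terms is $T,S,R ::= x \mid \lambda x.T \mid T\,S \mid \mathrm{der}\,T \mid\ !T$ (variable, abstraction, application, dereliction, box); $\lambda$ is the only binder, terms are taken up to $\alpha$-conversion, and $T\{S/x\}$ is capture-avoiding substitution (so $(!T)\{S/x\}=\,!(T\{S/x\})$). Contexts: $C ::= [\cdot] \mid \lambda x.C \mid C\,T \mid T\,C \mid \mathrm{der}\,C \mid\ !C$; ground contexts: $W ::= [\cdot] \mid \lambda x.W \mid W\,T \mid T\,W \mid \mathrm{der}\,W$. Root steps: $(\lambda x.T)(!S)\mapsto_v T\{S/x\}$, $\mathrm{der}(!T)\mapsto_d T$, and $\mapsto_b\,=\,\mapsto_v\cup\mapsto_d$. For $r\in\{v,d,b\}$, $T\to_r S$ iff $T=C[T']$, $S=C[S']$ for some context $C$ and $T'\mapsto_r S'$; $T\to_{wr}S$ is defined in the same way but with ground contexts $W$ only. $\lambda$-calculus. $\lambda$-terms: $M,N ::= V \mid M\,N$, values $V ::= x \mid \lambda x.M$. $\lambda$-contexts $C ::= [\cdot]\mid \lambda x.C\mid C\,M\mid M\,C$; CbN ground contexts $N ::= [\cdot]\mid\lambda x.N\mid N\,M$; CbV ground contexts $V ::= [\cdot]\mid V\,M\mid M\,V$. Root steps $(\lambda x.M)N\mapsto_\beta M\{N/x\}$ and $(\lambda x.M)V\mapsto_{\beta_v} M\{V/x\}$ for $V$ a value. $\to_\beta,\to_{\beta_v}$ are closures of these under $\lambda$-contexts; $\to_{w\beta}$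 is the closure of $\mapsto_\beta$ under CbN ground contexts; $\to_{w\beta_v}$ is the closure of $\mapsto_{\beta_v}$ under CbV ground contexts. Translations $\Lambda\to\,!\Lambda$: CbN: $x^n=x$, $(\lambda x.M)^n=\lambda x.M^n$, $(MN)^n=M^n\,(!N^n)$. CbV: $x^v=\,!x$, $(\lambda x.M)^v=\,!(\lambda x.M^v)$, $(MN)^v=(\mathrm{der}\,M^v)\,N^v$. *)

theory Defs
  imports Main
begin

(* Terms up to alpha-conversion are represented with de Bruijn indices:
   variable i refers to the i-th enclosing binder, or (if i exceeds the number of
   enclosing binders) to a free variable. *)

datatype bterm = BVar nat | BLam bterm | BApp bterm bterm | Der bterm | Box bterm

primrec blift :: "bterm \<Rightarrow> nat \<Rightarrow> bterm" where
  "blift (BVar i) k = (if i < k then BVar i else BVar (Suc i))"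
| "blift (BLam t) k = BLam (blift t (Suc k))"
| "blift (BApp t s) k = BApp (blift t k) (blift s k)"
| "blift (Der t) k = Der (blift t k)"
| "blift (Box t) k = Box (blift t k)"

primrec bsubst :: "bterm \<Rightarrow> bterm \<Rightarrow> nat \<Rightarrow> bterm" where
  "bsubst (BVar i) s k = (if k < i then BVar (i - 1) else if i = k then s else BVar i)"
| "bsubst (BLam t) s k = BLam (bsubst t (blift s 0) (Suc k))"
| "bsubst (BApp t u) s k = BApp (bsubst t s k) (bsubst u s k)"
| "bsubst (Der t) s k = Der (bsubst t s k)"
| "bsubst (Box t) s k = Box (bsubst t s k)"

datatype bctx = BHole | BCLam bctx | BCAppL bctx bterm | BCAppR bterm bctx | BCDer bctx | BCBox bctx

primrec bfill :: "bctx \<Rightarrow> bterm \<Rightarrow> bterm" where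
  "bfill BHole t = t"
| "bfill (BCLam C) t = BLam (bfill C t)"
| "bfill (BCAppL C s) t = BApp (bfill C t) s"
| "bfill (BCAppR s C) t = BApp s (bfill C t)"
| "bfill (BCDer C) t = Der (bfill C t)"
| "bfill (BCBox C) t = Box (bfill C t)"

primrec bground :: "bctx \<Rightarrow> bool" where
  "bground BHole = True"
| "bground (BCLam C) = bground C"
| "bground (BCAppL C s) = bground C"
| "bground (BCAppR s C) = bground C"
| "bground (BCDer C) = bground C"
| "bground (BCBox C) = False"

definition root_v :: "bterm \<Rightarrow> bterm \<Rightarrow> bool" where
  "root_v T S \<longleftrightarrow> (\<exists>t s. T = BApp (BLam t) (Box s) \<and> S = bsubst t s 0)"

definition root_d :: "bterm \<Rightarrow> bterm \<Rightarrow> bool" where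
  "root_d T S \<longleftrightarrow> T = Der (Box S)"

definition root_b :: "bterm \<Rightarrow> bterm \<Rightarrow> bool" where
  "root_b T S \<longleftrightarrow> root_v T S \<or> root_d T S"

definition bstep :: "(bterm \<Rightarrow> bterm \<Rightarrow> bool) \<Rightarrow> bterm \<Rightarrow> bterm \<Rightarrow> bool" where
  "bstep r T S \<longleftrightarrow> (\<exists>C T' S'. T = bfill C T' \<and> S = bfill C S' \<and> r T' S')"

definition bwstep :: "(bterm \<Rightarrow> bterm \<Rightarrow> bool) \<Rightarrow> bterm \<Rightarrow> bterm \<Rightarrow> bool" where
  "bwstep r T S \<longleftrightarrow> (\<exists>C T' S'. bground C \<and> T = bfill C T' \<and> S = bfill C S' \<and> r T' S')"

abbreviation "step_v \<equiv> bstep root_v"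
abbreviation "step_d \<equiv> bstep root_d"
abbreviation "step_b \<equiv> bstep root_b"
abbreviation "wstep_v \<equiv> bwstep root_v"
abbreviation "wstep_d \<equiv> bwstep root_d"
abbreviation "wstep_b \<equiv> bwstep root_b"

datatype lterm = Var nat | Lam lterm | App lterm lterm

primrec llift :: "lterm \<Rightarrow> nat \<Rightarrow> lterm" where
  "llift (Var i) k = (if i < k then Var i else Var (Suc i))"
| "llift (Lam t) k = Lam (llift t (Suc k))"
| "llift (App t s) k = App (llift t k) (llift s k)"

primrec lsubst :: "lterm \<Rightarrow> lterm \<Rightarrow> nat \<Rightarrow> lterm" where
  "lsubst (Var i) s k = (if k < i then Var (i - 1) else if i = k then s else Var i)"
| "lsubst (Lam t) s k = Lam (lsubst t (llift s 0) (Suc k))"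
| "lsubst (App t u) s k = App (lsubst t s k) (lsubst u s k)"

primrec is_value :: "lterm \<Rightarrow> bool" where
  "is_value (Var i) = True"
| "is_value (Lam t) = True"
| "is_value (App t u) = False"

datatype lctx = LHole | LCLam lctx | LCAppL lctx lterm | LCAppR lterm lctx

primrec lfill :: "lctx \<Rightarrow> lterm \<Rightarrow> lterm" where
  "lfill LHole t = t"
| "lfill (LCLam C) t = Lam (lfill C t)"
| "lfill (LCAppL C s) t = App (lfill C t) s"
| "lfill (LCAppR s C) t = App s (lfill C t)"

primrec cbn_ground :: "lctx \<Rightarrow> bool" where
  "cbn_ground LHole = True"
| "cbn_ground (LCLam C) = cbn_ground C"
| "cbn_ground (LCAppL C s) = cbn_ground C"
| "cbn_ground (LCAppR s C) = False"

primrec cbv_ground :: "lctx \<Rightarrow> bool" where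
  "cbv_ground LHole = True"
| "cbv_ground (LCLam C) = False"
| "cbv_ground (LCAppL C s) = cbv_ground C"
| "cbv_ground (LCAppR s C) = cbv_ground C"

definition root_beta :: "lterm \<Rightarrow> lterm \<Rightarrow> bool" where
  "root_beta M N \<longleftrightarrow> (\<exists>t s. M = App (Lam t) s \<and> N = lsubst t s 0)"

definition root_betav :: "lterm \<Rightarrow> lterm \<Rightarrow> bool" where
  "root_betav M N \<longleftrightarrow> (\<exists>t s. is_value s \<and> M = App (Lam t) s \<and> N = lsubst t s 0)"

definition beta :: "lterm \<Rightarrow> lterm \<Rightarrow> bool" where
  "beta M N \<longleftrightarrow> (\<exists>C M' N'. M = lfill C M' \<and> N = lfill C N' \<and> root_beta M' N')"

definition betav :: "lterm \<Rightarrow> lterm \<Rightarrow> bool" where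
  "betav M N \<longleftrightarrow> (\<exists>C M' N'. M = lfill C M' \<and> N = lfill C N' \<and> root_betav M' N')"

definition wbeta :: "lterm \<Rightarrow> lterm \<Rightarrow> bool" where
  "wbeta M N \<longleftrightarrow> (\<exists>C M' N'. cbn_ground C \<and> M = lfill C M' \<and> N = lfill C N' \<and> root_beta M' N')"

definition wbetav :: "lterm \<Rightarrow> lterm \<Rightarrow> bool" where
  "wbetav M N \<longleftrightarrow> (\<exists>C M' N'. cbv_ground C \<and> M = lfill C M' \<and> N = lfill C N' \<and> root_betav M' N')"

primrec cbn :: "lterm \<Rightarrow> bterm" where
  "cbn (Var i) = BVar i"
| "cbn (Lam t) = BLam (cbn t)"
| "cbn (App t s) = BApp (cbn t) (Box (cbn s))"

primrec cbv :: "lterm \<Rightarrow> bterm" where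
  "cbv (Var i) = Box (BVar i)"
| "cbv (Lam t) = Box (BLam (cbv t))"
| "cbv (App t s) = BApp (Der (cbv t)) (cbv s)"

end

theory Submission
  imports Defs
begin

(* CbN: M^n contains no dereliction and keeps every argument boxed, so a b-step from M^n can only
   be a v-step whose redex (\<lambda>x.P^n)(!N^n) is the image of a \<beta>-redex; since
   (P{N/x})^n = P^n{N^n/x}, firing it yields the image of the contractum.  The argument boxes are
   exactly why ground CbN forbids reduction inside arguments.

   CbV: M^v contains no v-redex at all, because the head of every application is a dereliction.
   A \<beta>_v-redex (\<lambda>x.P)V is mapped to der(!(\<lambda>x.P^v)) V^v, where V^v = !V'; the d-step
   strips the box and the following v-step fires with (P{V/x})^v = P^v{V'/x}.  Conversely a d-step
   followed by a v-step can only be this pair, on the image of a \<beta>_v-redex.  Here the boxes around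
   abstractions are why ground CbV forbids reduction under \<lambda>.

   Full and ground reduction differ only in which congruences are allowed, so both are instances
   of one closure, with flags switching those congruences on or off. *)

inductive bclosure :: "bool \<Rightarrow> (bterm \<Rightarrow> bterm \<Rightarrow> bool) \<Rightarrow> bterm \<Rightarrow> bterm \<Rightarrow> bool"
  for boxes :: bool and r :: "bterm \<Rightarrow> bterm \<Rightarrow> bool" where
  root: "r T S \<Longrightarrow> bclosure boxes r T S"
| lam: "bclosure boxes r T S \<Longrightarrow> bclosure boxes r (BLam T) (BLam S)"
| app_left: "bclosure boxes r T S \<Longrightarrow> bclosure boxes r (BApp T U) (BApp S U)"
| app_right: "bclosure boxes r T S \<Longrightarrow> bclosure boxes r (BApp U T) (BApp U S)"
| der: "bclosure boxes r T S \<Longrightarrow> bclosure boxes r (Der T) (Der S)"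
| box: "boxes \<Longrightarrow> bclosure boxes r T S \<Longrightarrow> bclosure boxes r (Box T) (Box S)"

inductive_cases bclosure_BVarE: "bclosure boxes r (BVar i) S"
inductive_cases bclosure_BLamE [consumes 1, case_names root lam]: "bclosure boxes r (BLam T) S"
inductive_cases bclosure_BAppE [consumes 1, case_names root app_left app_right]: "bclosure boxes r (BApp T U) S"
inductive_cases bclosure_DerE [consumes 1, case_names root der]: "bclosure boxes r (Der T) S"
inductive_cases bclosure_BoxE [consumes 1, case_names root box]: "bclosure boxes r (Box T) S"

lemma bclosure_iff_bfill:
  "bclosure boxes r T S \<longleftrightarrow>
    (\<exists>C T' S'. (boxes \<or> bground C) \<and> T = bfill C T' \<and> S = bfill C S' \<and> r T' S')"
proof
  assume "bclosure boxes r T S"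
  then show "\<exists>C T' S'. (boxes \<or> bground C) \<and> T = bfill C T' \<and> S = bfill C S' \<and> r T' S'"
    by induction (metis bfill.simps bground.simps)+
next
  assume "\<exists>C T' S'. (boxes \<or> bground C) \<and> T = bfill C T' \<and> S = bfill C S' \<and> r T' S'"
  then obtain C T' S' where "boxes \<or> bground C" "T = bfill C T'" "S = bfill C S'" "r T' S'"
    by blast
  then show "bclosure boxes r T S"
    by (induction C arbitrary: T S) (auto intro: bclosure.intros)
qed

lemma bstep_eq_bclosure: "bstep r = bclosure True r"
  by (intro ext) (simp add: bstep_def bclosure_iff_bfill)

lemma bwstep_eq_bclosure: "bwstep r = bclosure False r"
  by (intro ext) (simp add: bwstep_def bclosure_iff_bfill)

lemma bclosure_mono:
  "bclosure boxes r T S \<Longrightarrow> (\<And>x y. r x y \<Longrightarrow> r' x y) \<Longrightarrow> bclosure boxes r' T S"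
  by (induction rule: bclosure.induct) (auto intro: bclosure.intros)

lemma root_v_simps [simp]:
  "\<not> root_v (BVar i) S" "\<not> root_v (BLam T) S" "\<not> root_v (Der T) S" "\<not> root_v (Box T) S"
  "root_v (BApp T U) S \<longleftrightarrow> (\<exists>T' U'. T = BLam T' \<and> U = Box U' \<and> S = bsubst T' U' 0)"
  unfolding root_v_def by auto

lemma root_d_simps [simp]:
  "\<not> root_d (BVar i) S" "\<not> root_d (BLam T) S" "\<not> root_d (BApp T U) S" "\<not> root_d (Box T) S"
  "root_d (Der T) S \<longleftrightarrow> T = Box S"
  unfolding root_d_def by auto

inductive lclosure :: "bool \<Rightarrow> bool \<Rightarrow> (lterm \<Rightarrow> lterm \<Rightarrow> bool) \<Rightarrow> lterm \<Rightarrow> lterm \<Rightarrow> bool"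
  for lams args :: bool and r :: "lterm \<Rightarrow> lterm \<Rightarrow> bool" where
  root: "r M N \<Longrightarrow> lclosure lams args r M N"
| lam: "lams \<Longrightarrow> lclosure lams args r M N \<Longrightarrow> lclosure lams args r (Lam M) (Lam N)"
| app_left: "lclosure lams args r M N \<Longrightarrow> lclosure lams args r (App M P) (App N P)"
| app_right: "args \<Longrightarrow> lclosure lams args r M N \<Longrightarrow> lclosure lams args r (App P M) (App P N)"

primrec lctx_allowed :: "bool \<Rightarrow> bool \<Rightarrow> lctx \<Rightarrow> bool" where
  "lctx_allowed lams args LHole = True"
| "lctx_allowed lams args (LCLam C) = (lams \<and> lctx_allowed lams args C)"
| "lctx_allowed lams args (LCAppL C M) = lctx_allowed lams args C"
| "lctx_allowed lams args (LCAppR M C) = (args \<and> lctx_allowed lams args C)"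

lemma lclosure_iff_lfill:
  "lclosure lams args r M N \<longleftrightarrow>
    (\<exists>C M' N'. lctx_allowed lams args C \<and> M = lfill C M' \<and> N = lfill C N' \<and> r M' N')"
proof
  assume "lclosure lams args r M N"
  then show "\<exists>C M' N'. lctx_allowed lams args C \<and> M = lfill C M' \<and> N = lfill C N' \<and> r M' N'"
    by induction (metis lfill.simps lctx_allowed.simps)+
next
  assume "\<exists>C M' N'. lctx_allowed lams args C \<and> M = lfill C M' \<and> N = lfill C N' \<and> r M' N'"
  then obtain C M' N' where "lctx_allowed lams args C" "M = lfill C M'" "N = lfill C N'" "r M' N'"
    by blast
  then show "lclosure lams args r M N"
    by (induction C arbitrary: M N) (auto intro: lclosure.intros)
qed

lemma lctx_allowed_all: "lctx_allowed True True C"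
  by (induction C) auto

lemma cbn_ground_eq_lctx_allowed: "cbn_ground C = lctx_allowed True False C"
  by (induction C) auto

lemma cbv_ground_eq_lctx_allowed: "cbv_ground C = lctx_allowed False True C"
  by (induction C) auto

lemma beta_eq_lclosure: "beta = lclosure True True root_beta"
  by (intro ext) (simp add: beta_def lclosure_iff_lfill lctx_allowed_all)

lemma betav_eq_lclosure: "betav = lclosure True True root_betav"
  by (intro ext) (simp add: betav_def lclosure_iff_lfill lctx_allowed_all)

lemma wbeta_eq_lclosure: "wbeta = lclosure True False root_beta"
  by (intro ext) (simp add: wbeta_def lclosure_iff_lfill cbn_ground_eq_lctx_allowed)

lemma wbetav_eq_lclosure: "wbetav = lclosure False True root_betav"
  by (intro ext) (simp add: wbetav_def lclosure_iff_lfill cbv_ground_eq_lctx_allowed)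

lemma cbn_lift: "cbn (llift M k) = blift (cbn M) k"
  by (induction M arbitrary: k) auto

lemma cbn_subst: "cbn (lsubst M N k) = bsubst (cbn M) (cbn N) k"
  by (induction M arbitrary: N k) (auto simp: cbn_lift)

lemma cbn_eq_BLam: "cbn M = BLam T \<longleftrightarrow> (\<exists>P. M = Lam P \<and> T = cbn P)"
  by (cases M) auto

lemma cbn_root_b:
  "root_b (cbn M) S \<Longrightarrow> root_v (cbn M) S \<and> (\<exists>M'. S = cbn M' \<and> root_beta M M')"
  by (cases M) (auto simp: root_b_def root_beta_def cbn_eq_BLam cbn_subst)

lemma cbn_simulates_beta:
  "lclosure True boxes root_beta M M' \<Longrightarrow> bclosure boxes root_v (cbn M) (cbn M')"
  by (induction rule: lclosure.induct)
    (auto simp: root_beta_def cbn_subst intro: bclosure.intros)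

lemma cbn_reflects_b_steps:
  "bclosure boxes root_b (cbn M) S \<Longrightarrow>
    bclosure boxes root_v (cbn M) S \<and> (\<exists>M'. S = cbn M' \<and> lclosure True boxes root_beta M M')"
proof (induction M arbitrary: S)
  case (Var i)
  then show ?case
    by (auto elim: bclosure_BVarE simp: root_b_def)
next
  case (Lam P)
  from Lam.prems[simplified] show ?case
  proof (cases rule: bclosure_BLamE)
    case (lam S')
    with Lam.IH obtain P' where "bclosure boxes root_v (cbn P) S'" "S' = cbn P'"
      "lclosure True boxes root_beta P P'" by blast
    with lam show ?thesis
      by (auto intro!: exI[of _ "Lam P'"] bclosure.lam lclosure.lam)
  qed (simp add: root_b_def)
next
  case (App P N)
  from App.prems[simplified] show ?case
  proof (cases rule: bclosure_BAppE)
    case (app_left S')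
    with App.IH(1) obtain P' where "bclosure boxes root_v (cbn P) S'" "S' = cbn P'"
      "lclosure True boxes root_beta P P'" by blast
    with app_left show ?thesis
      by (auto intro!: exI[of _ "App P' N"] bclosure.app_left lclosure.app_left)
  next
    case (app_right S')
    from \<open>bclosure boxes root_b (Box (cbn N)) S'\<close>
    obtain S'' where "S' = Box S''" "boxes" "bclosure boxes root_b (cbn N) S''"
      by (cases rule: bclosure_BoxE) (auto simp: root_b_def)
    with App.IH(2) obtain N' where "bclosure boxes root_v (cbn N) S''" "S'' = cbn N'"
      "lclosure True boxes root_beta N N'" by blast
    with app_right \<open>S' = Box S''\<close> \<open>boxes\<close> show ?thesis
      by (auto intro!: exI[of _ "App P N'"] bclosure.app_right bclosure.box lclosure.app_right)
  qed (use cbn_root_b[of "App P N" S] in \<open>auto intro: bclosure.root lclosure.root\<close>)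
qed

(* Meaningful only for values; the clause for applications is junk. *)
primrec cbv_unboxed :: "lterm \<Rightarrow> bterm" where
  "cbv_unboxed (Var i) = BVar i"
| "cbv_unboxed (Lam M) = BLam (cbv M)"
| "cbv_unboxed (App M N) = BVar 0"

lemma cbv_eq_Box: "cbv M = Box T \<longleftrightarrow> is_value M \<and> T = cbv_unboxed M"
  by (cases M) auto

lemma cbv_value: "is_value V \<Longrightarrow> cbv V = Box (cbv_unboxed V)"
  by (simp add: cbv_eq_Box)

lemma cbv_lift: "cbv (llift M k) = blift (cbv M) k"
  by (induction M arbitrary: k) auto

lemma cbv_unboxed_lift: "is_value V \<Longrightarrow> cbv_unboxed (llift V k) = blift (cbv_unboxed V) k"
  by (cases V) (auto simp: cbv_lift)

lemma is_value_lift: "is_value V \<Longrightarrow> is_value (llift V k)"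
  by (cases V) auto

lemma cbv_subst: "is_value V \<Longrightarrow> cbv (lsubst M V k) = bsubst (cbv M) (cbv_unboxed V) k"
  by (induction M arbitrary: V k) (auto simp: cbv_value cbv_unboxed_lift is_value_lift)

lemma cbv_simulates_betav:
  "lclosure boxes True root_betav M M' \<Longrightarrow>
    \<exists>S0. bclosure boxes root_d (cbv M) S0 \<and> bclosure boxes root_v S0 (cbv M')"
proof (induction rule: lclosure.induct)
  case (root M M')
  then obtain P V where "is_value V" "M = App (Lam P) V" "M' = lsubst P V 0"
    by (auto simp: root_betav_def)
  then have "bclosure boxes root_d (cbv M) (BApp (BLam (cbv P)) (cbv V))"
    by (auto simp: cbv_value intro: bclosure.app_left[OF bclosure.root])
  moreover have "bclosure boxes root_v (BApp (BLam (cbv P)) (cbv V)) (cbv M')"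
    using \<open>is_value V\<close> \<open>M' = _\<close> by (auto simp: cbv_value cbv_subst intro!: bclosure.root)
  ultimately show ?case
    by blast
qed (auto intro: bclosure.intros)

lemma cbv_no_v_step: "\<not> bclosure boxes root_v (cbv M) S"
proof (induction M arbitrary: S)
  case (Var i)
  then show ?case
    by (auto elim!: bclosure_BoxE bclosure_BVarE)
next
  case (Lam M)
  then show ?case
    by (auto elim!: bclosure_BoxE bclosure_BLamE)
next
  case (App M N)
  then show ?case
    by (auto elim!: bclosure_BAppE bclosure_DerE)
qed

lemma cbv_unboxed_no_v_step: "is_value V \<Longrightarrow> \<not> bclosure boxes root_v (cbv_unboxed V) S"
  by (cases V) (auto elim!: bclosure_BVarE bclosure_BLamE simp: cbv_no_v_step)

lemma bclosure_v_BApp_DerE: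
  "bclosure boxes root_v (BApp (Der T) U) S \<Longrightarrow>
    (\<exists>T'. S = BApp (Der T') U \<and> bclosure boxes root_v T T') \<or>
    (\<exists>U'. S = BApp (Der T) U' \<and> bclosure boxes root_v U U')"
  by (auto elim!: bclosure_BAppE bclosure_DerE)

lemma cbv_unboxed_eq_BLam: "is_value M \<Longrightarrow> cbv_unboxed M = BLam T \<longleftrightarrow> (\<exists>P. M = Lam P \<and> T = cbv P)"
  by (cases M) auto

lemma cbv_reflects_fired_redex:
  assumes "is_value M" and "bclosure boxes root_v (BApp (cbv_unboxed M) (cbv N)) S"
  shows "\<exists>M'. S = cbv M' \<and> root_betav (App M N) M'"
  using assms(2)
proof (cases rule: bclosure_BAppE)
  case root
  then obtain P where "M = Lam P" "is_value N" "S = bsubst (cbv P) (cbv_unboxed N) 0"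
    using \<open>is_value M\<close> by (auto simp: cbv_unboxed_eq_BLam cbv_eq_Box)
  then show ?thesis
    by (auto simp: root_betav_def cbv_subst)
qed (use assms cbv_no_v_step cbv_unboxed_no_v_step in blast)+

lemma cbv_reflects_d_v_steps:
  "bclosure boxes root_d (cbv M) S0 \<Longrightarrow> bclosure boxes root_v S0 S \<Longrightarrow>
    \<exists>M'. S = cbv M' \<and> lclosure boxes True root_betav M M'"
proof (induction M arbitrary: S0 S)
  case (Var i)
  then show ?case
    by (auto elim!: bclosure_BoxE bclosure_BVarE)
next
  case (Lam P)
  from Lam.prems(1) obtain T where "boxes" "S0 = Box (BLam T)" "bclosure boxes root_d (cbv P) T"
    by (auto elim!: bclosure_BoxE bclosure_BLamE)
  moreover from Lam.prems(2) this(2) obtain U where "S = Box (BLam U)" "bclosure boxes root_v T U"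
    by (auto elim!: bclosure_BoxE bclosure_BLamE)
  ultimately obtain P' where "S = cbv (Lam P')" "lclosure boxes True root_betav P P'"
    using Lam.IH by fastforce
  with \<open>boxes\<close> show ?case
    by (blast intro: lclosure.lam)
next
  case (App P N)
  from App.prems(1) consider
      (fire) "is_value P" "S0 = BApp (cbv_unboxed P) (cbv N)"
    | (left) T where "S0 = BApp (Der T) (cbv N)" "bclosure boxes root_d (cbv P) T"
    | (right) T where "S0 = BApp (Der (cbv P)) T" "bclosure boxes root_d (cbv N) T"
    by (auto elim!: bclosure_BAppE bclosure_DerE simp: cbv_eq_Box)
  then show ?case
  proof cases
    case fire
    with App.prems(2) show ?thesis
      by (blast dest: cbv_reflects_fired_redex intro: lclosure.root)
  next
    case (left T)
    with App.prems(2) obtain T' where "S = BApp (Der T') (cbv N)" "bclosure boxes root_v T T'"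
      using cbv_no_v_step by (blast dest: bclosure_v_BApp_DerE)
    with left App.IH(1) obtain P' where "T' = cbv P'" "lclosure boxes True root_betav P P'"
      by blast
    with \<open>S = _\<close> show ?thesis
      by (auto intro!: exI[of _ "App P' N"] lclosure.app_left)
  next
    case (right T)
    with App.prems(2) obtain T' where "S = BApp (Der (cbv P)) T'" "bclosure boxes root_v T T'"
      using cbv_no_v_step by (blast dest: bclosure_v_BApp_DerE)
    with right App.IH(2) obtain N' where "T' = cbv N'" "lclosure boxes True root_betav N N'"
      by blast
    with \<open>S = _\<close> show ?thesis
      by (auto intro!: exI[of _ "App P N'"] lclosure.app_right)
  qed
qed

theorem mainTheorem1:
  fixes M :: lterm
  shows
   "((\<forall>M'. beta M M' \<longrightarrow> step_v (cbn M) (cbn M') \<and> step_b (cbn M) (cbn M')) \<and>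
     (\<forall>S. step_b (cbn M) S \<longrightarrow> step_v (cbn M) S \<and> (\<exists>M'. S = cbn M' \<and> beta M M')))
  \<and> ((\<forall>M'. wbeta M M' \<longrightarrow> wstep_v (cbn M) (cbn M') \<and> wstep_b (cbn M) (cbn M')) \<and>
     (\<forall>S. wstep_b (cbn M) S \<longrightarrow> wstep_v (cbn M) S \<and> (\<exists>M'. S = cbn M' \<and> wbeta M M')))
  \<and> ((\<forall>M'. betav M M' \<longrightarrow> (\<exists>S0. step_d (cbv M) S0 \<and> step_v S0 (cbv M'))
                          \<and> (\<exists>S0. step_b (cbv M) S0 \<and> step_b S0 (cbv M'))) \<and>
     (\<forall>S0 S. step_d (cbv M) S0 \<and> step_v S0 S \<longrightarrow> (\<exists>M'. S = cbv M' \<and> betav M M')))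
  \<and> ((\<forall>M'. wbetav M M' \<longrightarrow> (\<exists>S0. wstep_d (cbv M) S0 \<and> wstep_v S0 (cbv M'))
                          \<and> (\<exists>S0. wstep_b (cbv M) S0 \<and> wstep_b S0 (cbv M'))) \<and>
     (\<forall>S0 S. wstep_d (cbv M) S0 \<and> wstep_v S0 S \<longrightarrow> (\<exists>M'. S = cbv M' \<and> wbetav M M')))"
proof -
  have v_is_b: "bclosure boxes root_v T S \<Longrightarrow> bclosure boxes root_b T S"
    and d_is_b: "bclosure boxes root_d T S \<Longrightarrow> bclosure boxes root_b T S" for boxes T S
    by (auto elim: bclosure_mono simp: root_b_def)
  note cbn = cbn_simulates_beta cbn_reflects_b_steps
  note cbv = cbv_simulates_betav cbv_reflects_d_v_steps
  show ?thesis
    unfolding bstep_eq_bclosure bwstep_eq_bclosure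
      beta_eq_lclosure wbeta_eq_lclosure betav_eq_lclosure wbetav_eq_lclosure
    using cbn[where boxes = True] cbn[where boxes = False]
      cbv[where boxes = True] cbv[where boxes = False] v_is_b d_is_b
    by meson
qed

end
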